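(* Let $R$ be a commutative ring, $A$ a commutative $R$-algebra and $M$ an $A$-module. The differential bundle $\mathsf q_M:M[\varepsilon]\to A$ admits a vertical connection (in the dual-numbers tangent category of commutative $R$-algebras) if and only if $M=\{0\}$.
   Context: Work in the category of commutative $R$-algebras with $R$-algebra homomorphisms. For an algebra $B$, $B[\varepsilon]=\{x+y\varepsilon: x,y\in B,\ \varepsilon^2=0\}$ (dual numbers); for an algebra map $f$, $\mathsf T(f)(x+y\varepsilon)=f(x)+f(y)\varepsilon$. For an $A$-module $M$, $M[\varepsilon]=\{a+m\varepsilon: a\in A, m\in M\}$ is the square-zero extension algebra ($\varepsilon^2=0$, so $(m\varepsilon)(n\varepsilon)=0$), with projection $\mathsf q_M:M[\varepsilon]\to A$, $a+m\varepsilon\mapsto a$. Write $M[\varepsilon][\varepsilon']=\{a+m\varepsilon+b\varepsilon'+n\varepsilon\varepsilon'\}$ ($a,b\in A$, $m,n\in M$, $\varepsilon'^2=0$) for the dual numbers over $M[\varepsilon]$, and $M[\varepsilon][\varepsilon'][\varepsilon'']$ for the dual numbers over that. Maps: the lift $\lambda_M:M[\varepsilon]\to M[\varepsilon][\varepsilon']$, $a+m\varepsilon\mapsto a+m\varepsilon\varepsilon'$; the projection $\mathsf p_{M[\varepsilon]}:M[\varepsilon][\varepsilon']\to M[\varepsilon]$, $x+y\varepsilon'\mapsto x$; the vertical lift $\ell_{M[\varepsilon]}:M[\varepsilon][\varepsilon']\to M[\varepsilon][\varepsilon'][\varepsilon'']$, $x+y\varepsilon'\mapsto x+y\varepsilon'\varepsilon''$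 ($x,y\in M[\varepsilon]$); the canonical flip $\mathsf c_{M[\varepsilon]}$ on $M[\varepsilon][\varepsilon'][\varepsilon'']$, $x+y\varepsilon'+z\varepsilon''+w\varepsilon'\varepsilon''\mapsto x+z\varepsilon'+y\varepsilon''+w\varepsilon'\varepsilon''$; and $\mathsf T(\lambda_M):M[\varepsilon][\varepsilon'']\to M[\varepsilon][\varepsilon'][\varepsilon'']$, $x+y\varepsilon''\mapsto\lambda_M(x)+\lambda_M(y)\varepsilon''$, and similarly $\mathsf T(\mathsf K)(x+y\varepsilon'+z\varepsilon''+w\varepsilon'\varepsilon'')=\mathsf K(x+y\varepsilon')+\mathsf K(z+w\varepsilon')\varepsilon'$ identifying the outer variable. A vertical connection on $\mathsf q_M$ is an $R$-algebra map $\mathsf K:M[\varepsilon][\varepsilon']\to M[\varepsilon]$ such that (K1) $\mathsf K\circ\lambda_M=\mathrm{id}$; (K2) $\mathsf q_M\circ\mathsf K=\mathsf q_M\circ\mathsf p_{M[\varepsilon]}$; (K3) $\lambda_M\circ\mathsf K=\mathsf T(\mathsf K)\circ\ell_{M[\varepsilon]}$; (K4) $\lambda_M\circ\mathsf K=\mathsf T(\mathsf K)\circ\mathsf c_{M[\varepsilon]}\circ\mathsf T(\lambda_M)$. *)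

theory Defs
  imports Complex_Main
begin

text \<open>R is a type 'r of class comm_ring_1; A is a type 'a of class comm_ring_1
 made into an R-algebra by a unital ring homomorphism phi : R -> A; M is a type 'm with an
 A-module structure smul (locale module). Elements of the square-zero extension M[e] are pairs
 (a,m) meaning a + m e. Dual numbers B[e'] over an algebra B are pairs (x,y) meaning x + y e'.\<close>

definition ring_hom_R :: "('r::comm_ring_1 \<Rightarrow> 'a::comm_ring_1) \<Rightarrow> bool" where
  "ring_hom_R phi \<longleftrightarrow> phi 1 = 1 \<and> (\<forall>r s. phi (r + s) = phi r + phi s) \<and>
     (\<forall>r s. phi (r * s) = phi r * phi s)"

definition sqz_add :: "'a::comm_ring_1 \<times> 'm::ab_group_add \<Rightarrow> 'a \<times> 'm \<Rightarrow> 'a \<times> 'm" where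
  "sqz_add u v = (fst u + fst v, snd u + snd v)"
definition sqz_mul :: "('a::comm_ring_1 \<Rightarrow> 'm::ab_group_add \<Rightarrow> 'm) \<Rightarrow> 'a \<times> 'm \<Rightarrow> 'a \<times> 'm \<Rightarrow> 'a \<times> 'm" where
  "sqz_mul smul u v = (fst u * fst v, smul (fst u) (snd v) + smul (fst v) (snd u))"
definition sqz_one :: "'a::comm_ring_1 \<times> 'm::ab_group_add" where
  "sqz_one = (1, 0)"
definition sqz_zero :: "'a::comm_ring_1 \<times> 'm::ab_group_add" where
  "sqz_zero = (0, 0)"
definition sqz_scale :: "('r \<Rightarrow> 'a::comm_ring_1) \<Rightarrow> ('a \<Rightarrow> 'm::ab_group_add \<Rightarrow> 'm) \<Rightarrow> 'r \<Rightarrow> 'a \<times> 'm \<Rightarrow> 'a \<times> 'm" where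
  "sqz_scale phi smul r u = (phi r * fst u, smul (phi r) (snd u))"

definition dual_add :: "('b \<Rightarrow> 'b \<Rightarrow> 'b) \<Rightarrow> 'b \<times> 'b \<Rightarrow> 'b \<times> 'b \<Rightarrow> 'b \<times> 'b" where
  "dual_add add u v = (add (fst u) (fst v), add (snd u) (snd v))"
definition dual_mul :: "('b \<Rightarrow> 'b \<Rightarrow> 'b) \<Rightarrow> ('b \<Rightarrow> 'b \<Rightarrow> 'b) \<Rightarrow> 'b \<times> 'b \<Rightarrow> 'b \<times> 'b \<Rightarrow> 'b \<times> 'b" where
  "dual_mul add mul u v = (mul (fst u) (fst v), add (mul (fst u) (snd v)) (mul (snd u) (fst v)))"
definition dual_one :: "'b \<Rightarrow> 'b \<Rightarrow> 'b \<times> 'b" where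
  "dual_one one zero = (one, zero)"
definition dual_scale :: "('r \<Rightarrow> 'b \<Rightarrow> 'b) \<Rightarrow> 'r \<Rightarrow> 'b \<times> 'b \<Rightarrow> 'b \<times> 'b" where
  "dual_scale sc r u = (sc r (fst u), sc r (snd u))"

definition is_alg_hom ::
  "('b \<Rightarrow> 'b \<Rightarrow> 'b) \<Rightarrow> ('b \<Rightarrow> 'b \<Rightarrow> 'b) \<Rightarrow> 'b \<Rightarrow> ('r \<Rightarrow> 'b \<Rightarrow> 'b) \<Rightarrow>
   ('c \<Rightarrow> 'c \<Rightarrow> 'c) \<Rightarrow> ('c \<Rightarrow> 'c \<Rightarrow> 'c) \<Rightarrow> 'c \<Rightarrow> ('r \<Rightarrow> 'c \<Rightarrow> 'c) \<Rightarrow> ('b \<Rightarrow> 'c) \<Rightarrow> bool" where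
  "is_alg_hom addB mulB oneB scB addC mulC oneC scC f \<longleftrightarrow>
     (\<forall>x y. f (addB x y) = addC (f x) (f y)) \<and>
     (\<forall>x y. f (mulB x y) = mulC (f x) (f y)) \<and>
     f oneB = oneC \<and>
     (\<forall>r x. f (scB r x) = scC r (f x))"

definition is_alg_hom_K ::
  "('r::comm_ring_1 \<Rightarrow> 'a::comm_ring_1) \<Rightarrow> ('a \<Rightarrow> 'm::ab_group_add \<Rightarrow> 'm) \<Rightarrow>
   (('a \<times> 'm) \<times> ('a \<times> 'm) \<Rightarrow> 'a \<times> 'm) \<Rightarrow> bool" where
  "is_alg_hom_K phi smul K \<longleftrightarrow>
     is_alg_hom (dual_add sqz_add) (dual_mul sqz_add (sqz_mul smul)) (dual_one sqz_one sqz_zero)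
                (dual_scale (sqz_scale phi smul))
                sqz_add (sqz_mul smul) sqz_one (sqz_scale phi smul) K"

definition qM :: "'a \<times> 'm \<Rightarrow> 'a" where "qM u = fst u"
definition pM :: "('a \<times> 'm) \<times> ('a \<times> 'm) \<Rightarrow> 'a \<times> 'm" where "pM u = fst u"
definition liftM :: "'a::comm_ring_1 \<times> 'm::ab_group_add \<Rightarrow> ('a \<times> 'm) \<times> ('a \<times> 'm)" where
  "liftM u = ((fst u, 0), (0, snd u))"
definition vliftM :: "('a::comm_ring_1 \<times> 'm::ab_group_add) \<times> ('a \<times> 'm) \<Rightarrow>
     (('a \<times> 'm) \<times> ('a \<times> 'm)) \<times> (('a \<times> 'm) \<times> ('a \<times> 'm))" where
  "vliftM u = ((fst u, sqz_zero), (sqz_zero, snd u))"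
definition flipM :: "('b \<times> 'b) \<times> ('b \<times> 'b) \<Rightarrow> ('b \<times> 'b) \<times> ('b \<times> 'b)" where
  "flipM u = ((fst (fst u), fst (snd u)), (snd (fst u), snd (snd u)))"
definition Tmap :: "('b \<Rightarrow> 'c) \<Rightarrow> 'b \<times> 'b \<Rightarrow> 'c \<times> 'c" where
  "Tmap f u = (f (fst u), f (snd u))"

definition vertical_connection ::
  "('r::comm_ring_1 \<Rightarrow> 'a::comm_ring_1) \<Rightarrow> ('a \<Rightarrow> 'm::ab_group_add \<Rightarrow> 'm) \<Rightarrow>
   (('a \<times> 'm) \<times> ('a \<times> 'm) \<Rightarrow> 'a \<times> 'm) \<Rightarrow> bool" where
  "vertical_connection phi smul K \<longleftrightarrow>
     is_alg_hom_K phi smul K \<and>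
     K \<circ> liftM = id \<and>
     qM \<circ> K = qM \<circ> pM \<and>
     liftM \<circ> K = Tmap K \<circ> vliftM \<and>
     liftM \<circ> K = Tmap K \<circ> flipM \<circ> Tmap liftM"

end

theory Submission
  imports Defs
begin

text \<open>A vertical connection K vanishes on the element m\<epsilon> of M[\<epsilon>][\<epsilon>']: the
  axiom (K2) kills its A-component and (K3) its M-component. But the lift m\<epsilon>\<epsilon>' of m\<epsilon>
  factors as \<epsilon>' \<cdot> m\<epsilon>, so by (K1) and multiplicativity m\<epsilon> = K(\<epsilon>') K(m\<epsilon>) = 0.
  Conversely, for M = 0 the projection onto A satisfies all axioms. Neither direction uses
  that phi is a ring homomorphism.\<close>

lemma alg_hom_K_zero:
  fixes smul :: "'a::comm_ring_1 \<Rightarrow> 'm::ab_group_add \<Rightarrow> 'm"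
  assumes "is_alg_hom_K phi smul K"
  shows "K ((0, 0), (0, 0)) = (0, 0)"
proof -
  have "dual_add sqz_add ((0, 0), (0, 0)) ((0, 0), (0, 0)) = ((0 :: 'a, 0 :: 'm), (0, 0))"
    by (simp add: dual_add_def sqz_add_def)
  then have "K ((0, 0), (0, 0)) = sqz_add (K ((0, 0), (0, 0))) (K ((0, 0), (0, 0)))"
    using assms unfolding is_alg_hom_K_def is_alg_hom_def by metis
  then show ?thesis
    by (cases "K ((0, 0), (0, 0))") (simp add: sqz_add_def)
qed

lemma vertical_connection_vanishes_on_eps:
  fixes smul :: "'a::comm_ring_1 \<Rightarrow> 'm::ab_group_add \<Rightarrow> 'm" and m :: 'm
  assumes "vertical_connection phi smul K"
  shows "K ((0, m), (0, 0)) = (0, 0)"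
proof -
  have K2: "qM (K ((0, m), (0, 0))) = qM (pM ((0, m), (0, 0)))"
    and K3: "liftM (K ((0, m), (0, 0))) = Tmap K (vliftM ((0, m), (0, 0)))"
    using assms unfolding vertical_connection_def by (metis comp_apply)+
  have "K ((0, 0), (0, 0)) = (0, 0)"
    using assms alg_hom_K_zero unfolding vertical_connection_def by blast
  with K2 K3 show ?thesis
    by (cases "K ((0, m), (0, 0))")
      (simp add: liftM_def vliftM_def Tmap_def sqz_zero_def qM_def pM_def)
qed

lemma liftM_eps_eq_mult:
  assumes "module smul"
  shows "liftM (0, m) = dual_mul sqz_add (sqz_mul smul) ((0, 0), (1, 0)) ((0, m), (0, 0))"
proof -
  interpret module smul by fact
  show ?thesis by (simp add: dual_mul_def sqz_add_def sqz_mul_def liftM_def)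
qed

lemma vertical_connection_imp_trivial_module:
  fixes smul :: "'a::comm_ring_1 \<Rightarrow> 'm::ab_group_add \<Rightarrow> 'm" and m :: 'm
  assumes "module smul" and "vertical_connection phi smul K"
  shows "m = 0"
proof -
  interpret module smul by fact
  have K1: "K (liftM u) = u" for u
    using assms(2) unfolding vertical_connection_def by (metis comp_apply id_apply)
  have mult: "K (dual_mul sqz_add (sqz_mul smul) x y) = sqz_mul smul (K x) (K y)" for x y
    using assms(2) unfolding vertical_connection_def is_alg_hom_K_def is_alg_hom_def by blast
  have "(0, m) = K (liftM (0, m))" by (rule K1 [symmetric])
  also have "\<dots> = sqz_mul smul (K ((0, 0), (1, 0))) (K ((0, m), (0, 0)))"
    by (simp add: liftM_eps_eq_mult [OF assms(1)] mult)
  also have "\<dots> = (0, 0)"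
    by (simp add: vertical_connection_vanishes_on_eps [OF assms(2)] sqz_mul_def)
  finally show "m = 0" by simp
qed

lemma vertical_connection_trivial_module:
  fixes phi :: "'r::comm_ring_1 \<Rightarrow> 'a::comm_ring_1"
    and smul :: "'a \<Rightarrow> 'm::ab_group_add \<Rightarrow> 'm"
  assumes "\<forall>m::'m. m = 0"
  shows "vertical_connection phi smul (\<lambda>u. (fst (fst u), 0))"
  unfolding vertical_connection_def is_alg_hom_K_def is_alg_hom_def
  using assms
  by (auto simp: fun_eq_iff dual_add_def sqz_add_def dual_mul_def sqz_mul_def
      dual_one_def sqz_one_def dual_scale_def sqz_scale_def liftM_def qM_def pM_def
      vliftM_def Tmap_def flipM_def sqz_zero_def)

theorem proposition3p1:
  fixes phi :: "'r::comm_ring_1 \<Rightarrow> 'a::comm_ring_1"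
    and smul :: "'a \<Rightarrow> 'm::ab_group_add \<Rightarrow> 'm"
  assumes "ring_hom_R phi"
    and "module smul"
  shows "(\<exists>K. vertical_connection phi smul K) \<longleftrightarrow> (\<forall>m::'m. m = 0)"
  using vertical_connection_imp_trivial_module [OF assms(2)]
    vertical_connection_trivial_module [of phi smul]
  by blast

end
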